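(* Let $\varepsilon>0$, $\delta\in(0,1)$, $p=1-e^{-\varepsilon}$ and $k=\left\lceil\frac{1}{\varepsilon}\ln\left(\frac{e^{\varepsilon}+2\delta-1}{(e^{\varepsilon}+1)\delta}\right)\right\rceil$. Let $Q$ be a finite set of partitions, and consider databases $D$ in which each user is associated with at most one partition $q\in Q$. For $q\in Q$ let $c_q(D)$ be the number of users in $D$ associated with $q$, and let $Q_D=\{q\in Q: c_q(D)>0\}$. Let $(X_q)_{q\in Q}$ be i.i.d. random variables with the $k$-truncated symmetric geometric distribution with parameter $p$, and set $\hat c_q(D)=c_q(D)+X_q$. Then the mechanism that outputs the set $\{(q,\hat c_q(D)): q\in Q_D \text{ and } \hat c_q(D)>k\}$ is $(\varepsilon,\delta)$-differentially private.
   Context: For $p\in(0,1)$ and an integer $k\ge1$, the $k$-truncated symmetric geometric distribution with parameter $p$ is the distribution on $\mathbb{Z}$ with $\Pr[X=x]=c\,(1-p)^{|x|}$ for $x\in[-k,k]\cap\mathbb{Z}$ and $0$ otherwise, where $c=\frac{p}{1+(1-p)-2(1-p)^{k+1}}$. A randomized mechanism $\mathcal{M}$ is $(\varepsilon,\delta)$-differentially private if for any databases $D,D'$ where $D'$ is obtained from $D$ by adding or removing one user, and all sets $S$ of outputs, $\Pr[\mathcal{M}(D)\in S]\le e^{\varepsilon}\Pr[\mathcal{M}(D')\in S]+\delta$. *)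

theory Defs
  imports "HOL-Probability.Probability"
begin

text \<open>Normalising constant of the k-truncated symmetric geometric distribution.\<close>
definition tsg_const :: "real \<Rightarrow> nat \<Rightarrow> real" where
  "tsg_const p k = p / (1 + (1 - p) - 2 * (1 - p) ^ (k + 1))"

definition trunc_sym_geom :: "real \<Rightarrow> nat \<Rightarrow> int pmf" where
  "trunc_sym_geom p k =
     embed_pmf (\<lambda>x. if \<bar>x\<bar> \<le> int k then tsg_const p k * (1 - p) ^ nat \<bar>x\<bar> else 0)"

text \<open>Databases: multisets of users; each user u is associated with at most one
  partition, given by assoc u (None = no partition).\<close>
definition count_part :: "('u \<Rightarrow> 'q option) \<Rightarrow> 'q \<Rightarrow> 'u multiset \<Rightarrow> int" where
  "count_part assoc q D = int (size (filter_mset (\<lambda>u. assoc u = Some q) D))"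

definition neighbours :: "'u multiset \<Rightarrow> 'u multiset \<Rightarrow> bool" where
  "neighbours D D' \<longleftrightarrow> (\<exists>u. D' = add_mset u D) \<or> (\<exists>u. D = add_mset u D')"

definition diff_private :: "real \<Rightarrow> real \<Rightarrow> ('d \<Rightarrow> 'o pmf) \<Rightarrow> ('d \<Rightarrow> 'd \<Rightarrow> bool) \<Rightarrow> bool" where
  "diff_private \<epsilon> \<delta> M nb \<longleftrightarrow>
     (\<forall>D D' S. nb D D' \<longrightarrow>
        measure_pmf.prob (M D) S \<le> exp \<epsilon> * measure_pmf.prob (M D') S + \<delta>)"

definition partition_mech ::
  "'q set \<Rightarrow> ('u \<Rightarrow> 'q option) \<Rightarrow> real \<Rightarrow> nat \<Rightarrow> 'u multiset \<Rightarrow> ('q \<times> int) set pmf" where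
  "partition_mech Q assoc p k D =
     map_pmf (\<lambda>X. {(q, count_part assoc q D + X q) | q.
                     q \<in> Q \<and> count_part assoc q D > 0 \<and> count_part assoc q D + X q > int k})
             (Pi_pmf Q 0 (\<lambda>_. trunc_sym_geom p k))"

end

(*
  The mechanism post-processes the noise vector X, so it suffices to compare noise
  distributions. Adding a user of partition a raises the count c_a by one. If c_a > 0, the new
  output is the old output evaluated at X with X_a shifted by one; for the truncated geometric
  law with 1 - p = e^(-eps), neighbouring points have probabilities within a factor e^eps of
  each other, except at one boundary point of the support, whose mass is C (1 - p)^k. If
  c_a = 0, the two outputs differ only when 1 + X_a > k, i.e. X_a = k, an event of the same
  mass. The choice of k makes this mass at most delta.
*)

theory Submission
  imports Defs
begin

definition indist :: "real \<Rightarrow> real \<Rightarrow> 'a pmf \<Rightarrow> 'a pmf \<Rightarrow> bool" where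
  "indist \<epsilon> \<delta> M N \<longleftrightarrow>
     (\<forall>S. measure_pmf.prob M S \<le> exp \<epsilon> * measure_pmf.prob N S + \<delta>)"

lemma indist_refl:
  assumes "0 \<le> \<epsilon>" "0 \<le> \<delta>"
  shows "indist \<epsilon> \<delta> M M"
  unfolding indist_def using assms by (simp add: mult_le_cancel_right1 add_increasing2)

lemma indist_map_pmf: "indist \<epsilon> \<delta> M N \<Longrightarrow> indist \<epsilon> \<delta> (map_pmf f M) (map_pmf f N)"
  by (simp add: indist_def)

lemma measure_bind_pmf:
  "measure_pmf.prob (bind_pmf M N) S = measure_pmf.expectation M (\<lambda>x. measure_pmf.prob (N x) S)"
proof -
  have "emeasure (bind_pmf M N) S = (\<integral>\<^sup>+x. emeasure (N x) S \<partial>M)"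
    by (rule emeasure_bind_pmf)
  also have "\<dots> = (\<integral>\<^sup>+x. ennreal (measure_pmf.prob (N x) S) \<partial>M)"
    by (simp add: measure_pmf.emeasure_eq_measure)
  also have "\<dots> = ennreal (measure_pmf.expectation M (\<lambda>x. measure_pmf.prob (N x) S))"
    by (intro nn_integral_eq_integral measure_pmf.integrable_const_bound[where B = 1]) auto
  finally show ?thesis
    by (simp add: measure_pmf.emeasure_eq_measure)
qed

lemma indist_bind_pmf:
  assumes "\<And>x. x \<in> set_pmf K \<Longrightarrow> indist \<epsilon> \<delta> (f x) (g x)"
  shows "indist \<epsilon> \<delta> (bind_pmf K f) (bind_pmf K g)"
  unfolding indist_def
proof
  fix S
  have integrable: "integrable K (\<lambda>x. measure_pmf.prob (h x) S)" for h :: "_ \<Rightarrow> 'b pmf"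
    by (intro measure_pmf.integrable_const_bound[where B = 1]) auto
  have "measure_pmf.expectation K (\<lambda>x. measure_pmf.prob (f x) S)
        \<le> measure_pmf.expectation K (\<lambda>x. exp \<epsilon> * measure_pmf.prob (g x) S + \<delta>)"
    using assms unfolding indist_def
    by (intro integral_mono_AE) (auto simp: AE_measure_pmf_iff integrable)
  also have "\<dots> = exp \<epsilon> * measure_pmf.expectation K (\<lambda>x. measure_pmf.prob (g x) S) + \<delta>"
    by (simp add: integrable)
  finally show "measure_pmf.prob (bind_pmf K f) S \<le> exp \<epsilon> * measure_pmf.prob (bind_pmf K g) S + \<delta>"
    by (simp add: measure_bind_pmf)
qed

lemma indist_pointwise:
  assumes "\<And>x. x \<notin> B \<Longrightarrow> pmf M x \<le> exp \<epsilon> * pmf N x"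
    and "measure_pmf.prob M B \<le> \<delta>"
  shows "indist \<epsilon> \<delta> M N"
  unfolding indist_def
proof
  fix S
  have "measure_pmf.prob M S \<le> measure_pmf.prob M ((S - B) \<union> B)"
    by (intro measure_pmf.finite_measure_mono) auto
  also have "\<dots> \<le> measure_pmf.prob M (S - B) + measure_pmf.prob M B"
    by (rule measure_Un_le) auto
  also have "measure_pmf.prob M (S - B) = infsetsum (pmf M) (S - B)"
    by (rule measure_pmf_conv_infsetsum)
  also have "\<dots> \<le> infsetsum (\<lambda>x. exp \<epsilon> * pmf N x) (S - B)"
    using assms(1) by (intro infsetsum_mono) (auto intro: abs_summable_on_cmult_right)
  also have "\<dots> = exp \<epsilon> * measure_pmf.prob N (S - B)"
    by (subst infsetsum_cmult_right)
       (auto simp: measure_pmf_conv_infsetsum intro: abs_summable_on_subset[OF pmf_abs_summable])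
  also have "\<dots> \<le> exp \<epsilon> * measure_pmf.prob N S"
    by (intro mult_left_mono measure_pmf.finite_measure_mono) auto
  finally show "measure_pmf.prob M S \<le> exp \<epsilon> * measure_pmf.prob N S + \<delta>"
    using assms(2) by linarith
qed

lemma indist_map_pmf_eq_outside:
  assumes "\<And>x. x \<notin> B \<Longrightarrow> f x = g x" and "measure_pmf.prob M B \<le> \<delta>" and "0 \<le> \<epsilon>"
  shows "indist \<epsilon> \<delta> (map_pmf f M) (map_pmf g M)"
  unfolding indist_def
proof
  fix S
  have "measure_pmf.prob M (f -` S) \<le> measure_pmf.prob M (g -` S \<union> B)"
    using assms(1) by (intro measure_pmf.finite_measure_mono) auto
  also have "\<dots> \<le> measure_pmf.prob M (g -` S) + measure_pmf.prob M B"
    by (rule measure_Un_le) auto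
  also have "measure_pmf.prob M (g -` S) \<le> exp \<epsilon> * measure_pmf.prob M (g -` S)"
    using assms(3) by (simp add: mult_le_cancel_right1)
  finally show "measure_pmf.prob (map_pmf f M) S \<le> exp \<epsilon> * measure_pmf.prob (map_pmf g M) S + \<delta>"
    using assms(2) by simp
qed

lemma Pi_pmf_eq_bind_component:
  assumes "finite A" "a \<in> A"
  shows "Pi_pmf A dflt p = bind_pmf (Pi_pmf (A - {a}) dflt p) (\<lambda>f. map_pmf (\<lambda>y. f(a := y)) (p a))"
proof -
  have "Pi_pmf A dflt p = Pi_pmf (insert a (A - {a})) dflt p"
    using assms(2) by (simp add: insert_absorb)
  also have "\<dots> = bind_pmf (p a) (\<lambda>y. bind_pmf (Pi_pmf (A - {a}) dflt p) (\<lambda>f. return_pmf (f(a := y))))"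
    using assms(1) by (intro Pi_pmf_insert') auto
  also have "\<dots> = bind_pmf (Pi_pmf (A - {a}) dflt p) (\<lambda>f. map_pmf (\<lambda>y. f(a := y)) (p a))"
    by (subst bind_commute_pmf) (simp add: map_pmf_def)
  finally show ?thesis .
qed

lemma Pi_pmf_fun_upd_eq_bind:
  assumes "finite A" "a \<in> A"
  shows "Pi_pmf A dflt (p(a := M))
           = bind_pmf (Pi_pmf (A - {a}) dflt p) (\<lambda>f. map_pmf (\<lambda>y. f(a := y)) M)"
proof -
  have "Pi_pmf (A - {a}) dflt (p(a := M)) = Pi_pmf (A - {a}) dflt p"
    by (intro Pi_pmf_cong) auto
  then show ?thesis
    using Pi_pmf_eq_bind_component[OF assms, of dflt "p(a := M)"] by simp
qed

lemma map_pmf_fun_upd_Pi_pmf: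
  assumes "finite A" "a \<in> A"
  shows "map_pmf (\<lambda>X. X(a := f (X a))) (Pi_pmf A dflt p) = Pi_pmf A dflt (p(a := map_pmf f (p a)))"
  unfolding Pi_pmf_fun_upd_eq_bind[OF assms] Pi_pmf_eq_bind_component[OF assms, of dflt p]
  by (simp add: map_bind_pmf map_pmf_comp)

lemma indist_Pi_pmf_fun_upd:
  assumes "finite A" "a \<in> A" "indist \<epsilon> \<delta> M N"
  shows "indist \<epsilon> \<delta> (Pi_pmf A dflt (p(a := M))) (Pi_pmf A dflt (p(a := N)))"
  unfolding Pi_pmf_fun_upd_eq_bind[OF assms(1,2)]
  by (intro indist_bind_pmf indist_map_pmf assms(3))

lemma sum_power_abs_interval:
  fixes r :: "'a :: comm_ring_1"
  shows "(1 - r) * (\<Sum>x = - int k..int k. r ^ nat \<bar>x\<bar>) = 1 + r - 2 * r ^ (k + 1)"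
proof (induction k)
  case (Suc k)
  let ?S = "\<Sum>x = - int k..int k. r ^ nat \<bar>x\<bar>"
  have "{- int (Suc k)..int (Suc k)} = insert (int k + 1) (insert (- int k - 1) {- int k..int k})"
    by auto
  moreover have "nat \<bar>int k + 1\<bar> = k + 1" "nat \<bar>- int k - 1\<bar> = k + 1"
    by simp_all
  ultimately have "(\<Sum>x = - int (Suc k)..int (Suc k). r ^ nat \<bar>x\<bar>) = r ^ (k + 1) + r ^ (k + 1) + ?S"
    by (simp only: sum.insert finite_atLeastAtMost_int finite_insert add.assoc)
       (auto simp del: of_nat_Suc)
  also have "(1 - r) * \<dots> = 2 * (1 - r) * r ^ (k + 1) + (1 - r) * ?S"
    by (simp add: algebra_simps)
  also have "\<dots> = 1 + r - 2 * r ^ (Suc k + 1)"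
    unfolding Suc.IH by (simp add: algebra_simps)
  finally show ?case .
qed simp

lemma tsg_const_eq:
  fixes p :: real
  assumes "0 < p"
  shows "tsg_const p k = 1 / (\<Sum>x = - int k..int k. (1 - p) ^ nat \<bar>x\<bar>)"
proof -
  have "1 + (1 - p) - 2 * (1 - p) ^ (k + 1) = p * (\<Sum>x = - int k..int k. (1 - p) ^ nat \<bar>x\<bar>)"
    using sum_power_abs_interval[of "1 - p" k] by simp
  then show ?thesis
    using assms by (simp add: tsg_const_def)
qed

lemma tsg_const_pos:
  fixes p :: real
  assumes "0 < p" "p \<le> 1"
  shows "tsg_const p k > 0"
  using assms by (auto simp: tsg_const_eq intro!: sum_pos2[where i = 0])

lemma pmf_trunc_sym_geom:
  fixes p :: real
  assumes "0 < p" "p \<le> 1"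
  shows "pmf (trunc_sym_geom p k) x
           = (if \<bar>x\<bar> \<le> int k then tsg_const p k * (1 - p) ^ nat \<bar>x\<bar> else 0)"
  unfolding trunc_sym_geom_def
proof (rule pmf_embed_pmf)
  let ?S = "\<Sum>x = - int k..int k. (1 - p) ^ nat \<bar>x\<bar>"
  show "0 \<le> (if \<bar>x\<bar> \<le> int k then tsg_const p k * (1 - p) ^ nat \<bar>x\<bar> else 0)" for x
    using assms less_imp_le[OF tsg_const_pos[OF assms]] by simp
  have "(\<integral>\<^sup>+ x. ennreal (if \<bar>x\<bar> \<le> int k then tsg_const p k * (1 - p) ^ nat \<bar>x\<bar> else 0)
           \<partial>count_space UNIV)
        = (\<Sum>x = - int k..int k. ennreal (tsg_const p k * (1 - p) ^ nat \<bar>x\<bar>))"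
    by (subst nn_integral_count_space'[where A = "{- int k..int k}"]) (auto intro!: sum.cong)
  also have "\<dots> = ennreal (tsg_const p k * ?S)"
    using assms less_imp_le[OF tsg_const_pos[OF assms]]
    by (subst sum_ennreal) (auto simp: sum_distrib_left)
  also have "\<dots> = 1"
    using assms tsg_const_pos[OF assms, of k] by (simp add: tsg_const_eq)
  finally show "(\<integral>\<^sup>+ x. ennreal (if \<bar>x\<bar> \<le> int k then tsg_const p k * (1 - p) ^ nat \<bar>x\<bar> else 0)
           \<partial>count_space UNIV) = 1" .
qed

lemma pmf_trunc_sym_geom_uminus:
  fixes p :: real
  assumes "0 < p" "p \<le> 1"
  shows "pmf (trunc_sym_geom p k) (- x) = pmf (trunc_sym_geom p k) x"
  using assms by (simp add: pmf_trunc_sym_geom)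

lemma set_pmf_trunc_sym_geom:
  fixes p :: real
  assumes "0 < p" "p \<le> 1"
  shows "set_pmf (trunc_sym_geom p k) \<subseteq> {- int k..int k}"
  using assms by (auto simp: set_pmf_iff pmf_trunc_sym_geom split: if_splits)

lemma pmf_trunc_sym_geom_neighbour_le:
  fixes p :: real
  assumes "0 < p" "p \<le> 1" and "\<bar>x - y\<bar> \<le> 1" and "\<bar>x\<bar> \<le> int k \<Longrightarrow> \<bar>y\<bar> \<le> int k"
  shows "(1 - p) * pmf (trunc_sym_geom p k) x \<le> pmf (trunc_sym_geom p k) y"
proof (cases "\<bar>x\<bar> \<le> int k")
  case True
  have "(1 - p) * (1 - p) ^ nat \<bar>x\<bar> \<le> (1 - p) ^ nat \<bar>y\<bar>"
    using assms(1-3) by (subst power_Suc[symmetric], intro power_decreasing) auto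
  then have "tsg_const p k * ((1 - p) * (1 - p) ^ nat \<bar>x\<bar>) \<le> tsg_const p k * (1 - p) ^ nat \<bar>y\<bar>"
    using less_imp_le[OF tsg_const_pos[OF assms(1,2)]] by (rule mult_left_mono)
  then show ?thesis
    using True assms by (simp add: pmf_trunc_sym_geom mult.left_commute)
next
  case False
  then have "pmf (trunc_sym_geom p k) x = 0"
    using assms(1,2) by (simp add: pmf_trunc_sym_geom)
  then show ?thesis
    by simp
qed

lemma pmf_map_pmf_add_const:
  fixes c :: "'a :: group_add"
  shows "pmf (map_pmf (\<lambda>x. x + c) M) y = pmf M (y - c)"
  using pmf_map_inj'[of "\<lambda>x. x + c" M "y - c"] by (simp add: inj_def)

lemma indist_trunc_sym_geom_shift:
  fixes \<epsilon> \<delta> :: real and k :: nat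
  defines "\<mu> \<equiv> trunc_sym_geom (1 - exp (- \<epsilon>)) k"
  assumes "\<epsilon> > 0" and "pmf \<mu> (int k) \<le> \<delta>"
  shows "indist \<epsilon> \<delta> \<mu> (map_pmf (\<lambda>x. x + 1) \<mu>)"
    and "indist \<epsilon> \<delta> (map_pmf (\<lambda>x. x + 1) \<mu>) \<mu>"
proof -
  have p: "0 < 1 - exp (- \<epsilon>)" "1 - exp (- \<epsilon>) \<le> 1"
    using assms(2) by auto
  have step: "pmf \<mu> x \<le> exp \<epsilon> * pmf \<mu> y"
    if "\<bar>x - y\<bar> \<le> 1" "\<bar>x\<bar> \<le> int k \<Longrightarrow> \<bar>y\<bar> \<le> int k" for x y
  proof -
    have "exp (- \<epsilon>) * pmf \<mu> x \<le> pmf \<mu> y"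
      using pmf_trunc_sym_geom_neighbour_le[OF p that] by (simp add: \<mu>_def)
    then show ?thesis
      by (simp add: exp_minus field_simps)
  qed
  have symm: "pmf \<mu> (- int k) = pmf \<mu> (int k)"
    unfolding \<mu>_def by (rule pmf_trunc_sym_geom_uminus[OF p])
  show "indist \<epsilon> \<delta> \<mu> (map_pmf (\<lambda>x. x + 1) \<mu>)"
  proof (rule indist_pointwise[where B = "{- int k}"])
    show "pmf \<mu> x \<le> exp \<epsilon> * pmf (map_pmf (\<lambda>x. x + 1) \<mu>) x" if "x \<notin> {- int k}" for x
      using that by (auto simp: pmf_map_pmf_add_const intro!: step)
    show "measure_pmf.prob \<mu> {- int k} \<le> \<delta>"
      using assms(3) by (simp add: measure_pmf_single symm)
  qed
  show "indist \<epsilon> \<delta> (map_pmf (\<lambda>x. x + 1) \<mu>) \<mu>"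
  proof (rule indist_pointwise[where B = "{int k + 1}"])
    show "pmf (map_pmf (\<lambda>x. x + 1) \<mu>) x \<le> exp \<epsilon> * pmf \<mu> x" if "x \<notin> {int k + 1}" for x
      using that by (auto simp: pmf_map_pmf_add_const intro!: step)
    show "measure_pmf.prob (map_pmf (\<lambda>x. x + 1) \<mu>) {int k + 1} \<le> \<delta>"
      using assms(3) by (simp del: measure_map_pmf add: measure_pmf_single pmf_map_pmf_add_const)
  qed
qed

lemma pmf_trunc_sym_geom_boundary_le:
  fixes r \<delta> :: real
  assumes "0 < r" "r < 1" and "r ^ k * (1 - r + 2 * \<delta> * r) \<le> \<delta> * (1 + r)"
  shows "pmf (trunc_sym_geom (1 - r) k) (int k) \<le> \<delta>"
proof -
  have "r * r ^ k \<le> r"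
    using assms(1,2) by (simp add: mult_left_le power_le_one)
  then have "0 < 1 + r - 2 * r ^ (k + 1)"
    using assms(2) by simp
  moreover have "pmf (trunc_sym_geom (1 - r) k) (int k) = (1 - r) * r ^ k / (1 + r - 2 * r ^ (k + 1))"
    using assms(1,2) by (simp add: pmf_trunc_sym_geom tsg_const_def mult.commute)
  ultimately show ?thesis
    using assms(3) by (simp add: pos_divide_le_eq algebra_simps)
qed

lemma pmf_trunc_sym_geom_boundary_le_delta:
  fixes \<epsilon> \<delta> :: real
  assumes "\<epsilon> > 0" "\<delta> > 0"
    and "(1 / \<epsilon>) * ln ((exp \<epsilon> + 2 * \<delta> - 1) / ((exp \<epsilon> + 1) * \<delta>)) \<le> real k"
  shows "pmf (trunc_sym_geom (1 - exp (- \<epsilon>)) k) (int k) \<le> \<delta>"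
proof (rule pmf_trunc_sym_geom_boundary_le)
  let ?r = "exp (- \<epsilon>)"
  let ?N = "1 - ?r + 2 * \<delta> * ?r" and ?D = "\<delta> * (1 + ?r)"
  define A where "A = (exp \<epsilon> + 2 * \<delta> - 1) / ((exp \<epsilon> + 1) * \<delta>)"
  show "0 < ?r" "?r < 1"
    using assms(1) by auto
  have "1 < exp \<epsilon>"
    using assms(1) by simp
  then have "0 < exp \<epsilon> + 2 * \<delta> - 1" "0 < (exp \<epsilon> + 1) * \<delta>"
    using assms(2) by (linarith, simp add: add_pos_pos)
  then have "0 < A"
    unfolding A_def by (rule divide_pos_pos)
  moreover have "ln A \<le> \<epsilon> * k"
    using assms(1,3) unfolding A_def[symmetric] by (simp add: field_simps)
  ultimately have "A \<le> exp (\<epsilon> * k)"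
    by (metis exp_le_cancel_iff exp_ln)
  moreover have "A = (exp \<epsilon> * ?N) / (exp \<epsilon> * ?D)"
    unfolding A_def by (simp add: exp_minus algebra_simps)
  ultimately have "?N / ?D \<le> exp (\<epsilon> * k)"
    by simp
  moreover have "0 < ?D"
    using assms(2) by (simp add: add_pos_pos)
  ultimately have "?N \<le> exp (\<epsilon> * k) * ?D"
    by (simp add: pos_divide_le_eq)
  then have "?r ^ k * ?N \<le> (?r ^ k * exp (\<epsilon> * k)) * ?D"
    by (simp add: mult.assoc mult_left_mono)
  also have "?r ^ k * exp (\<epsilon> * k) = 1"
    by (simp add: exp_of_nat_mult[symmetric] exp_add[symmetric] mult.commute)
  finally show "?r ^ k * ?N \<le> ?D"
    by simp
qed

definition released_counts ::
    "'q set \<Rightarrow> nat \<Rightarrow> ('q \<Rightarrow> int) \<Rightarrow> ('q \<Rightarrow> int) \<Rightarrow> ('q \<times> int) set" where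
  "released_counts Q k c X = {(q, c q + X q) | q. q \<in> Q \<and> c q > 0 \<and> c q + X q > int k}"

lemma partition_mech_eq_map_released_counts:
  "partition_mech Q assoc p k D
     = map_pmf (released_counts Q k (\<lambda>q. count_part assoc q D)) (Pi_pmf Q 0 (\<lambda>_. trunc_sym_geom p k))"
  by (simp add: partition_mech_def released_counts_def[abs_def])

lemma released_counts_increment:
  assumes "c a > 0"
  shows "released_counts Q k (c(a := c a + 1)) X = released_counts Q k c (X(a := X a + 1))"
  using assms unfolding released_counts_def by (auto simp: algebra_simps)

lemma released_counts_new:
  assumes "c a = 0" "X a < int k"
  shows "released_counts Q k (c(a := 1)) X = released_counts Q k c X"
  using assms unfolding released_counts_def by auto force+

lemma count_part_add_mset:
  "count_part assoc q (add_mset u D) = count_part assoc q D + (if assoc u = Some q then 1 else 0)"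
  by (simp add: count_part_def)

lemma indist_released_counts_increment:
  fixes \<epsilon> \<delta> :: real and k :: nat and Q :: "'q set"
  defines "\<mu> \<equiv> trunc_sym_geom (1 - exp (- \<epsilon>)) k"
  defines "P \<equiv> Pi_pmf Q 0 (\<lambda>_. \<mu>)"
  assumes "finite Q" "a \<in> Q" "c a > 0" "\<epsilon> > 0" "pmf \<mu> (int k) \<le> \<delta>"
  shows "indist \<epsilon> \<delta> (map_pmf (released_counts Q k c) P)
                      (map_pmf (released_counts Q k (c(a := c a + 1))) P)"
    and "indist \<epsilon> \<delta> (map_pmf (released_counts Q k (c(a := c a + 1))) P)
                      (map_pmf (released_counts Q k c) P)"
proof -
  let ?P' = "Pi_pmf Q 0 ((\<lambda>_. \<mu>)(a := map_pmf (\<lambda>x. x + 1) \<mu>))"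
  have P: "P = Pi_pmf Q 0 ((\<lambda>_. \<mu>)(a := \<mu>))"
    by (simp add: P_def fun_upd_def)
  have "map_pmf (released_counts Q k (c(a := c a + 1))) P
          = map_pmf (released_counts Q k c) (map_pmf (\<lambda>X. X(a := X a + 1)) P)"
    unfolding map_pmf_comp using released_counts_increment[of c a, OF assms(5)]
    by (intro map_pmf_cong) auto
  also have "map_pmf (\<lambda>X. X(a := X a + 1)) P = ?P'"
    unfolding P_def using assms(3,4) by (rule map_pmf_fun_upd_Pi_pmf)
  finally have shifted: "map_pmf (released_counts Q k (c(a := c a + 1))) P
                           = map_pmf (released_counts Q k c) ?P'" .
  have shift: "indist \<epsilon> \<delta> \<mu> (map_pmf (\<lambda>x. x + 1) \<mu>)"
    "indist \<epsilon> \<delta> (map_pmf (\<lambda>x. x + 1) \<mu>) \<mu>"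
    using assms(6,7) unfolding \<mu>_def by (rule indist_trunc_sym_geom_shift)+
  show "indist \<epsilon> \<delta> (map_pmf (released_counts Q k c) P)
                      (map_pmf (released_counts Q k (c(a := c a + 1))) P)"
    unfolding shifted by (subst P, intro indist_map_pmf indist_Pi_pmf_fun_upd assms(3,4) shift)
  show "indist \<epsilon> \<delta> (map_pmf (released_counts Q k (c(a := c a + 1))) P)
                      (map_pmf (released_counts Q k c) P)"
    unfolding shifted by (subst P, intro indist_map_pmf indist_Pi_pmf_fun_upd assms(3,4) shift)
qed

lemma indist_released_counts_new:
  fixes p \<epsilon> \<delta> :: real and k :: nat and Q :: "'q set"
  defines "\<mu> \<equiv> trunc_sym_geom p k"
  defines "P \<equiv> Pi_pmf Q 0 (\<lambda>_. \<mu>)"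
  assumes "0 < p" "p \<le> 1" "finite Q" "a \<in> Q" "c a = 0" "0 \<le> \<epsilon>" "pmf \<mu> (int k) \<le> \<delta>"
  shows "indist \<epsilon> \<delta> (map_pmf (released_counts Q k c) P)
                      (map_pmf (released_counts Q k (c(a := 1))) P)"
    and "indist \<epsilon> \<delta> (map_pmf (released_counts Q k (c(a := 1))) P)
                      (map_pmf (released_counts Q k c) P)"
proof -
  let ?B = "{X. int k \<le> X a}"
  have "measure_pmf.prob P ?B = measure_pmf.prob (map_pmf (\<lambda>X. X a) P) {x. int k \<le> x}"
    by simp
  also have "\<dots> = measure_pmf.prob \<mu> ({x. int k \<le> x} \<inter> set_pmf \<mu>)"
    unfolding P_def using assms(5,6) by (simp add: Pi_pmf_component measure_Int_set_pmf)
  also have "\<dots> \<le> measure_pmf.prob \<mu> {int k}"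
    using set_pmf_trunc_sym_geom[OF assms(3,4), of k] unfolding \<mu>_def
    by (intro measure_pmf.finite_measure_mono) auto
  finally have B: "measure_pmf.prob P ?B \<le> \<delta>"
    using assms(9) by (simp add: measure_pmf_single)
  have agree: "released_counts Q k (c(a := 1)) X = released_counts Q k c X" if "X \<notin> ?B" for X
    using that assms(7) by (intro released_counts_new) auto
  show "indist \<epsilon> \<delta> (map_pmf (released_counts Q k c) P)
                      (map_pmf (released_counts Q k (c(a := 1))) P)"
    and "indist \<epsilon> \<delta> (map_pmf (released_counts Q k (c(a := 1))) P)
                      (map_pmf (released_counts Q k c) P)"
    using agree B assms(8) by (intro indist_map_pmf_eq_outside[where B = ?B]; auto)+
qed

lemma indist_released_counts_add_one:
  fixes \<epsilon> \<delta> :: real and k :: nat and Q :: "'q set"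
  defines "P \<equiv> Pi_pmf Q 0 (\<lambda>_. trunc_sym_geom (1 - exp (- \<epsilon>)) k)"
  assumes "finite Q" "a \<in> Q" "c a \<ge> 0" "\<epsilon> > 0"
    and "pmf (trunc_sym_geom (1 - exp (- \<epsilon>)) k) (int k) \<le> \<delta>"
  shows "indist \<epsilon> \<delta> (map_pmf (released_counts Q k c) P)
                      (map_pmf (released_counts Q k (c(a := c a + 1))) P)
       \<and> indist \<epsilon> \<delta> (map_pmf (released_counts Q k (c(a := c a + 1))) P)
                      (map_pmf (released_counts Q k c) P)"
proof (cases "c a = 0")
  case True
  have p: "0 < 1 - exp (- \<epsilon>)" "1 - exp (- \<epsilon>) \<le> 1"
    using assms(5) by auto
  from True have "c a + 1 = 1"
    by simp
  then show ?thesis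
    unfolding P_def
    using indist_released_counts_new[where c = c and a = a,
            OF p assms(2,3) True less_imp_le[OF assms(5)] assms(6)]
    by simp
next
  case False
  with assms(4) have "c a > 0"
    by linarith
  then show ?thesis
    unfolding P_def
    using indist_released_counts_increment[where c = c and a = a, OF assms(2,3) _ assms(5,6)]
    by blast
qed

lemma indist_partition_mech_add_mset:
  fixes \<epsilon> \<delta> :: real and k :: nat and Q :: "'q set" and assoc :: "'u \<Rightarrow> 'q option"
  defines "M \<equiv> partition_mech Q assoc (1 - exp (- \<epsilon>)) k"
  assumes "\<epsilon> > 0" "finite Q" "\<And>u q. assoc u = Some q \<Longrightarrow> q \<in> Q"
    and "pmf (trunc_sym_geom (1 - exp (- \<epsilon>)) k) (int k) \<le> \<delta>"
  shows "indist \<epsilon> \<delta> (M D) (M (add_mset u D)) \<and> indist \<epsilon> \<delta> (M (add_mset u D)) (M D)"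
proof -
  define c where "c = (\<lambda>q. count_part assoc q D)"
  have M: "M D' = map_pmf (released_counts Q k (\<lambda>q. count_part assoc q D'))
                     (Pi_pmf Q 0 (\<lambda>_. trunc_sym_geom (1 - exp (- \<epsilon>)) k))" for D'
    unfolding M_def by (rule partition_mech_eq_map_released_counts)
  show ?thesis
  proof (cases "assoc u")
    case None
    then have "(\<lambda>q. count_part assoc q (add_mset u D)) = c"
      by (simp add: c_def count_part_add_mset)
    moreover have "0 \<le> \<delta>"
      using pmf_nonneg assms(5) by (rule order_trans)
    ultimately show ?thesis
      unfolding M c_def using indist_refl[of \<epsilon> \<delta>] assms(2) by simp
  next
    case (Some a)
    then have "(\<lambda>q. count_part assoc q (add_mset u D)) = c(a := c a + 1)"
      by (auto simp: c_def count_part_add_mset)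
    moreover have "a \<in> Q"
      using Some assms(4) by blast
    moreover have "c a \<ge> 0"
      by (simp add: c_def count_part_def)
    ultimately show ?thesis
      unfolding M c_def[symmetric] using indist_released_counts_add_one assms(2,3,5) by metis
  qed
qed

theorem theorem6:
  fixes \<epsilon> \<delta> :: real and Q :: "'q set" and assoc :: "'u \<Rightarrow> 'q option"
  assumes "\<epsilon> > 0" and "0 < \<delta>" and "\<delta> < 1"
    and "finite Q"
    and "\<And>u q. assoc u = Some q \<Longrightarrow> q \<in> Q"
  shows "let p = 1 - exp (- \<epsilon>);
             k = nat \<lceil>(1 / \<epsilon>) * ln ((exp \<epsilon> + 2 * \<delta> - 1) / ((exp \<epsilon> + 1) * \<delta>))\<rceil>
         in diff_private \<epsilon> \<delta> (partition_mech Q assoc p k) neighbours"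
proof -
  define k where "k = nat \<lceil>(1 / \<epsilon>) * ln ((exp \<epsilon> + 2 * \<delta> - 1) / ((exp \<epsilon> + 1) * \<delta>))\<rceil>"
  let ?M = "partition_mech Q assoc (1 - exp (- \<epsilon>)) k"
  have "pmf (trunc_sym_geom (1 - exp (- \<epsilon>)) k) (int k) \<le> \<delta>"
    using assms(1,2) real_nat_ceiling_ge unfolding k_def
    by (rule pmf_trunc_sym_geom_boundary_le_delta)
  then have "indist \<epsilon> \<delta> (?M D) (?M (add_mset u D)) \<and> indist \<epsilon> \<delta> (?M (add_mset u D)) (?M D)"
    for D u using assms(1,4,5) by (intro indist_partition_mech_add_mset)
  then have "diff_private \<epsilon> \<delta> ?M neighbours"
    unfolding diff_private_def neighbours_def indist_def by blast
  then show ?thesis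
    unfolding k_def Let_def .
qed

end
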